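(* Let $\ell$ be a Lyndon word with $|\ell|\ge2$, let $u$ be a word or $u=\infty$, and let $\ell=r_js_js_{j-1}\cdots s_1$ be the iterated standard factorization of $\ell$ with respect to $u$. Then $$r_j<\ell<s_1\le s_2\le\dots\le s_{j-1}\le s_j.$$
   Context: Words are finite sequences over a totally ordered alphabet, compared in lexicographic order (a proper prefix is smaller than the word); $\infty$ is a formal symbol with $w<\infty$ for every word $w$. A Lyndon word is a nonempty word strictly smaller than each of its proper nonempty suffixes. A word is even/odd if its length is. For a Lyndon word $\ell$ with $|\ell|\ge2$ and $u$ a word or $\infty$, the iterated standard factorization (ISF) of $\ell$ with respect to $u$ is the unique factorization $\ell=r_js_js_{j-1}\cdots s_1$, $j\ge1$, such that: (a) for every $i\in[j]$, $s_i$ is the lexicographically smallest proper nonempty suffix of $r_js_js_{j-1}\cdots s_i$; (b) for every $i\in[j-1]$, $s_i$ has even length and $s_i<u$; (c) $s_j$ has odd length or $u\le s_j$. (It is obtained by repeatedly removing the smallest proper suffix of the remaining word, which stays Lyndon, until the removed suffix fails condition (b).) *)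

theory Defs
  imports Main
begin

text \<open>Words over a totally ordered alphabet are lists over a linorder type; they are
compared by the lexicographic order lexordp (a proper prefix is smaller) and its
reflexive version lexordp_eq.\<close>

abbreviation lex_less :: "'a::linorder list \<Rightarrow> 'a list \<Rightarrow> bool" where
  "lex_less \<equiv> lexordp (<)"

abbreviation lex_le :: "'a::linorder list \<Rightarrow> 'a list \<Rightarrow> bool" where
  "lex_le \<equiv> lexordp_eq"

datatype 'a word_or_inf = Word "'a list" | Infty

definition less_wi :: "'a::linorder list \<Rightarrow> 'a word_or_inf \<Rightarrow> bool" where
  "less_wi w u = (case u of Infty \<Rightarrow> True | Word v \<Rightarrow> lex_less w v)"

definition lyndon :: "'a::linorder list \<Rightarrow> bool" where
  "lyndon w \<longleftrightarrow> w \<noteq> [] \<and> (\<forall>i. 0 < i \<and> i < length w \<longrightarrow> lex_less w (drop i w))"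

definition smallest_proper_suffix :: "'a::linorder list \<Rightarrow> 'a list \<Rightarrow> bool" where
  "smallest_proper_suffix w s \<longleftrightarrow>
     (\<exists>i. 0 < i \<and> i < length w \<and> s = drop i w) \<and>
     (\<forall>i. 0 < i \<and> i < length w \<longrightarrow> lex_le s (drop i w))"

text \<open>Iterated standard factorization  l = r s_j s_(j-1) ... s_1  with respect to u.
The list ss = [s_1, ..., s_j] (so ss ! (i-1) = s_i), j = length ss.\<close>
definition is_ISF :: "'a::linorder list \<Rightarrow> 'a word_or_inf \<Rightarrow> 'a list \<Rightarrow> 'a list list \<Rightarrow> bool" where
  "is_ISF l u r ss \<longleftrightarrow>
     ss \<noteq> [] \<and>
     l = r @ concat (rev ss) \<and>
     (\<forall>k < length ss. smallest_proper_suffix (r @ concat (rev (drop k ss))) (ss ! k)) \<and>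
     (\<forall>k < length ss - 1. even (length (ss ! k)) \<and> less_wi (ss ! k) u) \<and>
     (odd (length (last ss)) \<or> \<not> less_wi (last ss) u)"

end

theory Submission
  imports Defs
begin

text \<open>Write \<open>w\<^sub>i = r s\<^sub>j \<dots> s\<^sub>i\<close>, so that \<open>s\<^sub>i\<close> is the smallest proper suffix of \<open>w\<^sub>i\<close> and
\<open>w\<^sub>1 = l\<close>. Then \<open>l < s\<^sub>1\<close> because \<open>l\<close> is Lyndon, and \<open>r < l\<close> because \<open>r\<close> is a proper prefix
of \<open>l\<close>. For \<open>s\<^sub>i \<le> s\<^sub>i\<^sub>+\<^sub>1\<close>, let \<open>s = s\<^sub>i\<close> and \<open>t = s\<^sub>i\<^sub>+\<^sub>1\<close>; since \<open>t s\<close> is a proper suffix of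
\<open>w\<^sub>i\<close> we have \<open>s \<le> t s\<close>. If \<open>t < s\<close>, then either \<open>t\<close> and \<open>s\<close> differ at some position,
which gives \<open>t s < s\<close>, or \<open>s = t v\<close> with \<open>v\<close> a nonempty proper suffix of \<open>w\<^sub>i\<close>, and
\<open>t v \<le> t s\<close> together with the minimality of \<open>s\<close> forces \<open>v = s\<close>.\<close>

lemma lex_less_iff_lexordp: "lex_less xs ys \<longleftrightarrow> ord_class.lexordp xs ys"
  by (simp add: List.lexordp_def lexordp_conv_lexord)

lemma lexordp_eq_append_leftD:
  "lexordp_eq (zs @ xs) (zs @ ys) \<Longrightarrow> lexordp_eq (xs :: 'a::linorder list) ys"
  by (induct zs) auto

lemma lyndon_less_smallest_proper_suffix:
  assumes "lyndon w" and "smallest_proper_suffix w s"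
  shows "lex_less w s"
  using assms unfolding lyndon_def smallest_proper_suffix_def by auto

lemma smallest_proper_suffix_append_le:
  fixes p s t :: "'a::linorder list"
  assumes s_min: "smallest_proper_suffix (p @ s) s"
    and t_min: "smallest_proper_suffix p t"
  shows "lex_le s t"
proof (rule ccontr)
  assume "\<not> lex_le s t"
  then have "ord_class.lexordp t s"
    using lexordp_eq_linear lexordp_conv_lexordp_eq by blast
  obtain i where i: "0 < i" "i < length p" "t = drop i p"
    using t_min unfolding smallest_proper_suffix_def by blast
  have s_le: "lex_le s (drop k (p @ s))" if "0 < k" "k < length p + length s" for k
    using s_min that unfolding smallest_proper_suffix_def by simp
  have s_le_ts: "lex_le s (t @ s)"
    using s_le[of i] i by simp
  from \<open>ord_class.lexordp t s\<close>[unfolded lexordp_iff] show False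
  proof (elim disjE exE conjE)
    fix x vs
    assume s: "s = t @ x # vs"
    have "lex_le (t @ x # vs) (t @ s)"
      using s_le_ts s by simp
    then have "lex_le (x # vs) s"
      by (rule lexordp_eq_append_leftD)
    moreover have "lex_le s (x # vs)"
      using s_le[of "length p + length t"] s i by simp
    ultimately have "s = x # vs"
      by (rule lexordp_eq_antisym[rotated])
    then show False
      using s i by simp
  next
    fix us a b vs ws
    assume "a < b" "t = us @ a # vs" "s = us @ b # ws"
    then have "ord_class.lexordp (t @ s) s"
      using lexordp_append_left_rightI[of a b us "vs @ s" ws] by simp
    then show False
      using s_le_ts lexordp_conv_lexordp_eq by blast
  qed
qed

lemma is_ISF_smallest_proper_suffix_first:
  assumes "is_ISF l u r ss"
  shows "smallest_proper_suffix l (ss ! 0)"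
  using assms unfolding is_ISF_def by fastforce

lemma is_ISF_prefix_less:
  assumes "is_ISF l u r ss"
  shows "lex_less r l"
proof -
  have "smallest_proper_suffix l (ss ! 0)"
    using assms by (rule is_ISF_smallest_proper_suffix_first)
  then have "length r < length l"
    using assms unfolding is_ISF_def smallest_proper_suffix_def
    by (cases ss) auto
  moreover have "l = r @ concat (rev ss)"
    using assms unfolding is_ISF_def by blast
  ultimately show ?thesis
    unfolding lex_less_iff_lexordp by (auto intro: lexordp_append_rightI)
qed

lemma is_ISF_suffix_le_next:
  assumes "is_ISF l u r ss" and "k + 1 < length ss"
  shows "lex_le (ss ! k) (ss ! (k + 1))"
proof -
  define w where "w = r @ concat (rev (drop (k + 1) ss))"
  have min: "smallest_proper_suffix (r @ concat (rev (drop i ss))) (ss ! i)"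
    if "i < length ss" for i
    using assms(1) that unfolding is_ISF_def by blast
  have "drop k ss = ss ! k # drop (k + 1) ss"
    using assms(2) by (simp add: Cons_nth_drop_Suc)
  then have "smallest_proper_suffix (w @ ss ! k) (ss ! k)"
    using min[of k] assms(2) unfolding w_def by simp
  moreover have "smallest_proper_suffix w (ss ! (k + 1))"
    using min[of "k + 1"] assms(2) unfolding w_def by simp
  ultimately show ?thesis
    by (rule smallest_proper_suffix_append_le)
qed

theorem lemma4p19:
  fixes l r :: "'a::linorder list" and u :: "'a word_or_inf" and ss :: "'a list list"
  assumes "lyndon l" and "2 \<le> length l" and "is_ISF l u r ss"
  shows "lex_less r l \<and> lex_less l (ss ! 0) \<and>
         (\<forall>k. k + 1 < length ss \<longrightarrow> lex_le (ss ! k) (ss ! (k + 1)))"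
proof (intro conjI allI impI)
  show "lex_less r l"
    using assms(3) by (rule is_ISF_prefix_less)
  show "lex_less l (ss ! 0)"
    using assms(1) is_ISF_smallest_proper_suffix_first[OF assms(3)]
    by (rule lyndon_less_smallest_proper_suffix)
  show "lex_le (ss ! k) (ss ! (k + 1))" if "k + 1 < length ss" for k
    using assms(3) that by (rule is_ISF_suffix_le_next)
qed

end
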